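(* Let $m\in\mathbb{N}$ and let $X=\{a_1,\dots,a_n\}\subset\mathbb{R}^m$ be a finite point cloud with at least two points, equipped with the Euclidean metric $d_X$. Let $\rho_{\mathrm{UTD}}:X\to\mathcal{S}(\mathbb{C}^{m+1})$ be the uniformly transformed diagonal encoding $\rho_{\mathrm{UTD}}(x)=\sum_{j=1}^{m+1}\mathcal{T}_X(x)_j\,|j\rangle\langle j|$. Then for all $x,y\in X$, $$d_{\mathrm{HS}}\big(\rho_{\mathrm{UTD}}(x),\rho_{\mathrm{UTD}}(y)\big)=\frac{d_X(x,y)}{r(X)\sqrt{m(m+1)}}.$$
   Context: Let $\bar a=\frac1n\sum_{i=1}^n a_i$ be the mean of $X$, $\mathrm{diam}(X)=\max_{i,j}\lVert a_i-a_j\rVert$, and $r(X)=\mathrm{diam}(X)/2$. Let $R_m$ be the $(m+1)\times(m+1)$ orthogonal matrix with entries: for $i,j\in\{1,\dots,m\}$, $(R_m)_{ii}=\frac{1+(m-1)\sqrt{m+1}}{m\sqrt{m+1}}$ and $(R_m)_{ij}=\frac{1-\sqrt{m+1}}{m\sqrt{m+1}}$ for $i\ne j$; $(R_m)_{m+1,j}=-\frac{1}{\sqrt{m+1}}$ for $j\in\{1,\dots,m\}$; and $(R_m)_{i,m+1}=\frac{1}{\sqrt{m+1}}$ for all $i\in\{1,\dots,m+1\}$. The uniform transformation $\mathcal{T}_X:\mathbb{R}^m\to\mathbb{R}^{m+1}$ associated with $X$ is $$\mathcal{T}_X(x)=\frac{1}{r(X)\sqrt{m(m+1)}}\,R_m\begin{bmatrix}x-\bar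 a\\0\end{bmatrix}+\frac{1}{m+1}\mathbf{1}_{m+1},$$ where $\mathbf{1}_{m+1}$ is the all-ones vector (this maps $X$ into the probability simplex $\Delta^m=\{p\in\mathbb{R}^{m+1}:p_j\ge0,\ \sum_j p_j=1\}$). $|1\rangle,\dots,|m+1\rangle$ is the standard basis of $\mathbb{C}^{m+1}$, $\mathcal{S}(\mathbb{C}^{m+1})$ the set of density matrices, and $d_{\mathrm{HS}}(\rho,\sigma)=\sqrt{\mathrm{Tr}[(\rho-\sigma)^\dagger(\rho-\sigma)]}$ is the Hilbert--Schmidt distance. *)

theory Defs
  imports Complex_Main
begin

text \<open>Points of R^m are functions nat => real, coordinates indexed by 1..m
  (and identically zero outside 1..m). Vectors/matrices of C^(d) use indices 1..d.\<close>

definition in_Rm :: "nat \<Rightarrow> (nat \<Rightarrow> real) \<Rightarrow> bool" where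
  "in_Rm m a \<longleftrightarrow> (\<forall>i. i \<notin> {1..m} \<longrightarrow> a i = 0)"

definition eucl_dist :: "nat \<Rightarrow> (nat \<Rightarrow> real) \<Rightarrow> (nat \<Rightarrow> real) \<Rightarrow> real" where
  "eucl_dist m x y = sqrt (\<Sum>i=1..m. (x i - y i)^2)"

definition mean_pt :: "(nat \<Rightarrow> real) set \<Rightarrow> (nat \<Rightarrow> real)" where
  "mean_pt X = (\<lambda>i. (\<Sum>a\<in>X. a i) / real (card X))"

definition diam_pc :: "nat \<Rightarrow> (nat \<Rightarrow> real) set \<Rightarrow> real" where
  "diam_pc m X = Max {eucl_dist m a b | a b. a \<in> X \<and> b \<in> X}"

definition rad_pc :: "nat \<Rightarrow> (nat \<Rightarrow> real) set \<Rightarrow> real" where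
  "rad_pc m X = diam_pc m X / 2"

definition R_mat :: "nat \<Rightarrow> nat \<Rightarrow> nat \<Rightarrow> real" where
  "R_mat m i j =
     (if i \<in> {1..m} \<and> j \<in> {1..m} then
        (if i = j then (1 + (real m - 1) * sqrt (real m + 1)) / (real m * sqrt (real m + 1))
         else (1 - sqrt (real m + 1)) / (real m * sqrt (real m + 1)))
      else if i = m + 1 \<and> j \<in> {1..m} then - 1 / sqrt (real m + 1)
      else if i \<in> {1..m+1} \<and> j = m + 1 then 1 / sqrt (real m + 1)
      else 0)"

definition unif_transf :: "nat \<Rightarrow> (nat \<Rightarrow> real) set \<Rightarrow> (nat \<Rightarrow> real) \<Rightarrow> (nat \<Rightarrow> real)" where
  "unif_transf m X x = (\<lambda>i. if i \<in> {1..m+1} then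
      (1 / (rad_pc m X * sqrt (real m * (real m + 1)))) *
        (\<Sum>j=1..m+1. R_mat m i j * (if j \<le> m then x j - mean_pt X j else 0))
      + 1 / (real m + 1)
    else 0)"

definition ket :: "nat \<Rightarrow> nat \<Rightarrow> complex" where
  "ket j = (\<lambda>i. if i = j then 1 else 0)"

definition outer :: "(nat \<Rightarrow> complex) \<Rightarrow> (nat \<Rightarrow> complex) \<Rightarrow> nat \<Rightarrow> nat \<Rightarrow> complex" where
  "outer u v = (\<lambda>i k. u i * cnj (v k))"

definition rho_UTD :: "nat \<Rightarrow> (nat \<Rightarrow> real) set \<Rightarrow> (nat \<Rightarrow> real) \<Rightarrow> nat \<Rightarrow> nat \<Rightarrow> complex" where
  "rho_UTD m X x = (\<lambda>i k. \<Sum>j=1..m+1. complex_of_real (unif_transf m X x j) * outer (ket j) (ket j) i k)"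

definition mat_adj :: "(nat \<Rightarrow> nat \<Rightarrow> complex) \<Rightarrow> nat \<Rightarrow> nat \<Rightarrow> complex" where
  "mat_adj A = (\<lambda>i k. cnj (A k i))"

definition mat_mul :: "nat \<Rightarrow> (nat \<Rightarrow> nat \<Rightarrow> complex) \<Rightarrow> (nat \<Rightarrow> nat \<Rightarrow> complex) \<Rightarrow> nat \<Rightarrow> nat \<Rightarrow> complex" where
  "mat_mul d A B = (\<lambda>i k. \<Sum>l=1..d. A i l * B l k)"

definition mat_trace :: "nat \<Rightarrow> (nat \<Rightarrow> nat \<Rightarrow> complex) \<Rightarrow> complex" where
  "mat_trace d A = (\<Sum>i=1..d. A i i)"

text \<open>Hilbert-Schmidt distance of d x d matrices (the trace is real and nonnegative).\<close>
definition d_HS :: "nat \<Rightarrow> (nat \<Rightarrow> nat \<Rightarrow> complex) \<Rightarrow> (nat \<Rightarrow> nat \<Rightarrow> complex) \<Rightarrow> real" where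
  "d_HS d \<rho> \<sigma> = sqrt (Re (mat_trace d (mat_mul d (mat_adj (\<lambda>i k. \<rho> i k - \<sigma> i k)) (\<lambda>i k. \<rho> i k - \<sigma> i k))))"

end

theory Submission
  imports Defs
begin

text \<open>Both encodings are diagonal, so their Hilbert-Schmidt distance is the Euclidean distance of
  the diagonals, i.e. of the images under the uniform transformation. That transformation is an
  affine map whose linear part is a multiple of \<open>R\<^sub>m\<close> applied to \<open>[x; 0]\<close>, and \<open>R\<^sub>m\<close> is an
  isometry on such vectors; the mean cancels in the difference.\<close>

definition diag_mat :: "nat \<Rightarrow> (nat \<Rightarrow> real) \<Rightarrow> nat \<Rightarrow> nat \<Rightarrow> complex" where
  "diag_mat d p = (\<lambda>i k. if i = k \<and> i \<in> {1..d} then complex_of_real (p i) else 0)"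

definition R_mat_apply :: "nat \<Rightarrow> (nat \<Rightarrow> real) \<Rightarrow> nat \<Rightarrow> real" where
  "R_mat_apply m w i = (\<Sum>j=1..m+1. R_mat m i j * (if j \<le> m then w j else 0))"

lemma rho_UTD_eq_diag_mat: "rho_UTD m X x = diag_mat (m + 1) (unif_transf m X x)"
proof (intro ext)
  fix i k
  have "rho_UTD m X x i k
      = (\<Sum>j=1..m+1. if j = i then (if i = k then complex_of_real (unif_transf m X x i) else 0) else 0)"
    unfolding rho_UTD_def outer_def ket_def by (intro sum.cong) auto
  also have "\<dots> = diag_mat (m + 1) (unif_transf m X x) i k"
    unfolding diag_mat_def by (subst sum.delta) auto
  finally show "rho_UTD m X x i k = diag_mat (m + 1) (unif_transf m X x) i k" .
qed

lemma d_HS_diag_mat: "d_HS d (diag_mat d p) (diag_mat d q) = sqrt (\<Sum>i=1..d. (p i - q i)^2)"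
proof -
  have "mat_trace d (mat_mul d (mat_adj (\<lambda>i k. diag_mat d p i k - diag_mat d q i k))
          (\<lambda>i k. diag_mat d p i k - diag_mat d q i k))
      = (\<Sum>i=1..d. \<Sum>l=1..d. if l = i then complex_of_real ((p i - q i)^2) else 0)"
    unfolding mat_trace_def mat_mul_def mat_adj_def diag_mat_def
    by (intro sum.cong refl) (auto simp: power2_eq_square)
  also have "\<dots> = (\<Sum>i=1..d. complex_of_real ((p i - q i)^2))"
    by (intro sum.cong refl) (subst sum.delta, auto)
  finally show ?thesis by (simp add: d_HS_def)
qed

lemma R_mat_apply_diff:
  "R_mat_apply m (\<lambda>j. v j - w j) i = R_mat_apply m v i - R_mat_apply m w i"
  unfolding R_mat_apply_def sum_subtractf[symmetric] by (intro sum.cong) (auto simp: algebra_simps)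

lemma R_mat_apply_upper:
  assumes "i \<in> {1..m}"
  shows "R_mat_apply m w i
    = w i + (1 - sqrt (real m + 1)) / (real m * sqrt (real m + 1)) * (\<Sum>j=1..m. w j)"
proof -
  define b where "b = (1 - sqrt (real m + 1)) / (real m * sqrt (real m + 1))"
  have diag: "R_mat m i i = b + 1"
    using assms by (simp add: R_mat_def b_def field_simps)
  have "R_mat_apply m w i = (\<Sum>j=1..m. R_mat m i j * w j)"
    by (simp add: R_mat_apply_def)
  also have "\<dots> = (\<Sum>j=1..m. b * w j + (if j = i then w j else 0))"
    using assms diag by (intro sum.cong refl) (auto simp: R_mat_def b_def algebra_simps)
  also have "\<dots> = w i + b * (\<Sum>j=1..m. w j)"
    using assms by (simp add: sum.distrib sum_distrib_left)
  finally show ?thesis by (simp add: b_def)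
qed

lemma R_mat_apply_last:
  "R_mat_apply m w (m + 1) = - (\<Sum>j=1..m. w j) / sqrt (real m + 1)"
proof -
  have "R_mat_apply m w (m + 1) = (\<Sum>j=1..m. (- 1 / sqrt (real m + 1)) * w j)"
    by (simp add: R_mat_apply_def R_mat_def)
  then show ?thesis by (simp add: sum_negf sum_divide_distrib)
qed

text \<open>Here \<open>b\<close> is the off-diagonal entry of \<open>R\<^sub>m\<close>; the left-hand side is the coefficient of
  \<open>(\<Sum> w)\<^sup>2\<close> in the squared norm of \<open>R\<^sub>m [w; 0]\<close>.\<close>
lemma R_mat_cross_coefficient:
  fixes m :: nat and s b :: real
  assumes "m \<ge> 1" and "s = sqrt (real m + 1)" and "b = (1 - s) / (real m * s)"
  shows "2 * b + real m * b^2 + 1 / s^2 = 0"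
proof -
  have s: "s > 0" and m: "real m > 0"
    using assms by auto
  have "(2 * b + real m * b^2 + 1 / s^2) * (real m * s^2) = 2 * (1 - s) * s + (1 - s)^2 + real m"
    using s m by (simp add: assms(3) field_simps power2_eq_square)
  also have "\<dots> = real m + 1 - s^2"
    by (simp add: algebra_simps power2_eq_square)
  also have "\<dots> = 0"
    using assms(2) by simp
  finally show ?thesis using s m by simp
qed

lemma R_mat_apply_norm:
  assumes "m \<ge> 1"
  shows "(\<Sum>i=1..m+1. (R_mat_apply m w i)^2) = (\<Sum>i=1..m. (w i)^2)"
proof -
  define s where "s = sqrt (real m + 1)"
  define b where "b = (1 - s) / (real m * s)"
  define S where "S = (\<Sum>j=1..m. w j)"
  have "(\<Sum>i=1..m+1. (R_mat_apply m w i)^2)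
      = (\<Sum>i=1..m. (R_mat_apply m w i)^2) + (R_mat_apply m w (m + 1))^2"
    by simp
  also have "\<dots> = (\<Sum>i=1..m. (w i + b * S)^2) + (S / s)^2"
    unfolding R_mat_apply_last by (simp add: R_mat_apply_upper b_def s_def S_def power2_minus)
  also have "(\<Sum>i=1..m. (w i + b * S)^2) = (\<Sum>i=1..m. (w i)^2 + (2 * b * S) * w i + (b * S)^2)"
    by (intro sum.cong refl) (simp add: algebra_simps power2_eq_square)
  also have "\<dots> = (\<Sum>i=1..m. (w i)^2) + (2 * b * S) * S + real m * (b * S)^2"
    by (simp add: sum.distrib sum_distrib_left[symmetric] S_def)
  also have "\<dots> + (S / s)^2 = (\<Sum>i=1..m. (w i)^2) + S^2 * (2 * b + real m * b^2 + 1 / s^2)"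
    by (simp add: power_divide algebra_simps power2_eq_square)
  also have "2 * b + real m * b^2 + 1 / s^2 = 0"
    using R_mat_cross_coefficient[OF assms s_def b_def] .
  finally show ?thesis by simp
qed

lemma unif_transf_diff:
  assumes "i \<in> {1..m+1}"
  shows "unif_transf m X x i - unif_transf m X y i
    = R_mat_apply m (\<lambda>j. x j - y j) i / (rad_pc m X * sqrt (real m * (real m + 1)))"
proof -
  have "R_mat_apply m (\<lambda>j. x j - y j) i
      = R_mat_apply m (\<lambda>j. x j - mean_pt X j) i - R_mat_apply m (\<lambda>j. y j - mean_pt X j) i"
    by (subst R_mat_apply_diff[symmetric]) simp
  then show ?thesis
    using assms unfolding unif_transf_def R_mat_apply_def
    by (simp add: diff_divide_distrib del: sum.cl_ivl_Suc)
qed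

lemma rad_pc_nonneg:
  assumes "finite X" and "x \<in> X"
  shows "rad_pc m X \<ge> 0"
proof -
  have "finite {eucl_dist m a b | a b. a \<in> X \<and> b \<in> X}"
    using assms(1) by (simp add: finite_image_set2)
  then have "eucl_dist m x x \<le> diam_pc m X"
    unfolding diam_pc_def using assms(2) by (intro Max_ge) auto
  then show ?thesis by (simp add: rad_pc_def eucl_dist_def)
qed

lemma card_le_1_if_in_R0:
  assumes "\<forall>a\<in>X. in_Rm 0 a"
  shows "card X \<le> 1"
proof -
  have "X \<subseteq> {\<lambda>_. 0}"
    using assms by (auto simp: in_Rm_def fun_eq_iff)
  then show ?thesis
    using card_mono[of "{\<lambda>_::nat. 0::real}" X] by simp
qed

theorem mainTheorem2:
  fixes m :: nat and X :: "(nat \<Rightarrow> real) set" and x y :: "nat \<Rightarrow> real"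
  assumes "finite X" and "card X \<ge> 2" and "\<forall>a\<in>X. in_Rm m a"
    and "x \<in> X" and "y \<in> X"
  shows "d_HS (m + 1) (rho_UTD m X x) (rho_UTD m X y)
           = eucl_dist m x y / (rad_pc m X * sqrt (real m * (real m + 1)))"
proof -
  define c where "c = rad_pc m X * sqrt (real m * (real m + 1))"
  have m: "m \<ge> 1"
    using assms(2,3) card_le_1_if_in_R0[of X] by (cases m) auto
  have c: "c \<ge> 0"
    using rad_pc_nonneg[OF assms(1,4)] by (simp add: c_def)
  have "d_HS (m + 1) (rho_UTD m X x) (rho_UTD m X y)
      = sqrt (\<Sum>i=1..m+1. (R_mat_apply m (\<lambda>j. x j - y j) i / c)^2)"
    unfolding rho_UTD_eq_diag_mat d_HS_diag_mat c_def
    by (simp add: unif_transf_diff del: sum.cl_ivl_Suc)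
  also have "\<dots> = sqrt ((\<Sum>i=1..m+1. (R_mat_apply m (\<lambda>j. x j - y j) i)^2) / c^2)"
    by (simp add: power_divide sum_divide_distrib del: sum.cl_ivl_Suc)
  also have "\<dots> = sqrt (\<Sum>i=1..m. (x i - y i)^2) / c"
    using c by (simp only: R_mat_apply_norm[OF m] real_sqrt_divide real_sqrt_abs abs_of_nonneg
        flip: real_sqrt_power)
  finally show ?thesis by (simp add: c_def eucl_dist_def)
qed

end
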